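(* Let $\mathbf x=(x_1,\dots,x_n)\in\mathbb R_{\ge0}^n$, let $B\ge1$ be an integer, and let $\mathbf a=\mathrm{RAS}(\mathbf x;B)$. Then for all $i,j\in[n]$, $$a_jx_j\le(a_i+1)x_i.$$
   Context: $\odot$ is the entrywise product and $\mathbf e_i$ the $i$-th unit vector. RAS$(x_1,\dots,x_n;B)$: relabel indices so that $x_1\le\dots\le x_n$ (the output is returned in the original labeling). If $B=1$ return $\mathbf e_1$. Otherwise let $\mathbf a=\mathrm{RAS}(\mathbf x;B-1)$; let $r=\min\{i:a_i=0\}$ if $a_n=0$, else $r=n$; let $M=\arg\min_{i\in[r]}\|(\mathbf a+\mathbf e_i)\odot\mathbf x\|_\infty$; choose $j\in M$ minimizing the cardinality of $\arg\max_{i\in[r]}(a_i+e_{j,i})x_i$; return $\mathbf a+\mathbf e_j$. *)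

theory Defs
  imports Main "HOL.Real"
begin

text \<open>Vectors in R^n / N^n are functions on indices 0..n-1 (index k corresponds to the
paper's index k+1); entries outside 0..n-1 are irrelevant for inputs and 0 for outputs.\<close>

definition unitv :: "nat \<Rightarrow> nat \<Rightarrow> nat" where
  "unitv j = (\<lambda>i. if i = j then 1 else 0)"

definition supnorm :: "nat \<Rightarrow> (nat \<Rightarrow> real) \<Rightarrow> real" where
  "supnorm n v = Max ((\<lambda>m. \<bar>v m\<bar>) ` {0..<n})"

text \<open>One step of RAS on already sorted data y (y_0 \<le> ... \<le> y_(n-1)).\<close>

definition ras_range :: "nat \<Rightarrow> (nat \<Rightarrow> nat) \<Rightarrow> nat set" where
  "ras_range n a = (if a (n - 1) = 0 then {0..(LEAST i. a i = 0)} else {0..<n})"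

definition ras_M :: "nat \<Rightarrow> (nat \<Rightarrow> real) \<Rightarrow> (nat \<Rightarrow> nat) \<Rightarrow> nat set" where
  "ras_M n y a = {i \<in> ras_range n a. \<forall>k \<in> ras_range n a.
      supnorm n (\<lambda>m. real (a m + unitv i m) * y m) \<le> supnorm n (\<lambda>m. real (a m + unitv k m) * y m)}"

definition ras_argmax :: "nat \<Rightarrow> (nat \<Rightarrow> real) \<Rightarrow> (nat \<Rightarrow> nat) \<Rightarrow> nat \<Rightarrow> nat set" where
  "ras_argmax n y a j = {i \<in> ras_range n a. \<forall>k \<in> ras_range n a.
      real (a k + unitv j k) * y k \<le> real (a i + unitv j i) * y i}"

text \<open>All possible runs (any tie-breaking) of RAS on sorted input.\<close>
inductive ras_sorted :: "nat \<Rightarrow> (nat \<Rightarrow> real) \<Rightarrow> nat \<Rightarrow> (nat \<Rightarrow> nat) \<Rightarrow> bool"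
  for n :: nat and y :: "nat \<Rightarrow> real" where
  base: "ras_sorted n y 1 (unitv 0)"
| step: "\<lbrakk> ras_sorted n y B a; j \<in> ras_M n y a;
          \<forall>j' \<in> ras_M n y a. card (ras_argmax n y a j) \<le> card (ras_argmax n y a j') \<rbrakk>
        \<Longrightarrow> ras_sorted n y (Suc B) (\<lambda>i. a i + unitv j i)"

text \<open>RAS with relabeling: a sorting permutation \<sigma> of {0..<n} (any one, ties arbitrary),
run on x \<circ> \<sigma>, and translate back to the original labeling.\<close>
definition ras :: "nat \<Rightarrow> (nat \<Rightarrow> real) \<Rightarrow> nat \<Rightarrow> (nat \<Rightarrow> nat) \<Rightarrow> bool" where
  "ras n x B a \<longleftrightarrow> (\<exists>\<sigma> b. bij_betw \<sigma> {0..<n} {0..<n}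
      \<and> (\<forall>i j. i \<le> j \<and> j < n \<longrightarrow> x (\<sigma> i) \<le> x (\<sigma> j))
      \<and> ras_sorted n (x \<circ> \<sigma>) B b
      \<and> (\<forall>i < n. a (\<sigma> i) = b i) \<and> (\<forall>i \<ge> n. a i = 0))"

end

theory Submission
  imports Defs
begin

text \<open>
  The inequality is an invariant of the greedy loop: call a balanced on y if
  a_q y_q \<le> (a_p + 1) y_p for all p, q.
  For balanced a, the sup-norm of (a + e_i) \<odot> y is just (a_i + 1) y_i, so RAS adds one unit
  at an index minimising (a_i + 1) y_i over its candidate range.  On sorted nonnegative
  input that range loses nothing: every index beyond the first zero entry k of a has
  (a_i + 1) y_i \<ge> y_i \<ge> y_k = (a_k + 1) y_k.  Adding one unit at a global minimiser keeps
  a balanced, and so does the initial vector e_1.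
\<close>

definition balanced :: "nat \<Rightarrow> (nat \<Rightarrow> real) \<Rightarrow> (nat \<Rightarrow> nat) \<Rightarrow> bool" where
  "balanced n y a \<longleftrightarrow> (\<forall>p<n. \<forall>q<n. real (a q) * y q \<le> (real (a p) + 1) * y p)"

lemma ras_range_subset:
  assumes "n \<ge> 1"
  shows "ras_range n a \<subseteq> {0..<n}"
proof (cases "a (n - 1) = 0")
  case True
  then have "(LEAST i. a i = 0) \<le> n - 1" by (rule Least_le)
  then show ?thesis using True assms unfolding ras_range_def by auto
qed (simp add: ras_range_def)

lemma supnorm_add_unitv_balanced:
  assumes bal: "balanced n y a" and nonneg: "\<forall>m<n. y m \<ge> 0" and i: "i < n"
  shows "supnorm n (\<lambda>m. real (a m + unitv i m) * y m) = (real (a i) + 1) * y i"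
  unfolding supnorm_def
proof (rule Max_eqI)
  fix z assume "z \<in> (\<lambda>m. \<bar>real (a m + unitv i m) * y m\<bar>) ` {0..<n}"
  then obtain m where m: "m < n" and z: "z = real (a m + unitv i m) * y m"
    using nonneg by auto
  show "z \<le> (real (a i) + 1) * y i"
  proof (cases "m = i")
    case True
    then show ?thesis using z by (simp add: unitv_def add.commute)
  next
    case False
    then show ?thesis using z bal m i by (simp add: unitv_def balanced_def)
  qed
next
  have "(real (a i) + 1) * y i = \<bar>real (a i + unitv i i) * y i\<bar>"
    using nonneg i by (simp add: unitv_def)
  then show "(real (a i) + 1) * y i \<in> (\<lambda>m. \<bar>real (a m + unitv i m) * y m\<bar>) ` {0..<n}"
    using i by auto
qed simp

lemma balanced_unitv_0:
  assumes sorted: "\<forall>i j. i \<le> j \<and> j < n \<longrightarrow> y i \<le> y j" and nonneg: "\<forall>m<n. y m \<ge> 0"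
  shows "balanced n y (unitv 0)"
  unfolding balanced_def unitv_def using assms by (auto simp: zero_le_mult_iff)

lemma balanced_add_unitv_at_min:
  assumes bal: "balanced n y a" and nonneg: "\<forall>m<n. y m \<ge> 0"
    and min: "\<forall>i<n. (real (a j) + 1) * y j \<le> (real (a i) + 1) * y i"
  shows "balanced n y (\<lambda>m. a m + unitv j m)"
  unfolding balanced_def
proof (intro allI impI)
  fix p q assume p: "p < n" and q: "q < n"
  have old: "real (a q) * y q \<le> (real (a p) + 1) * y p"
    using bal p q by (simp add: balanced_def)
  have grow: "(real (a p) + 1) * y p \<le> (real (a p + unitv j p) + 1) * y p"
    using nonneg p by (intro mult_right_mono) (auto simp: unitv_def)
  show "real (a q + unitv j q) * y q \<le> (real (a p + unitv j p) + 1) * y p"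
  proof (cases "q = j")
    case True
    then show ?thesis
      using min p nonneg by (cases "p = j") (auto simp: unitv_def algebra_simps)
  next
    case False
    then show ?thesis using old grow by (simp add: unitv_def)
  qed
qed

lemma ras_M_global_min:
  assumes n: "n \<ge> 1" and bal: "balanced n y a"
    and sorted: "\<forall>i j. i \<le> j \<and> j < n \<longrightarrow> y i \<le> y j" and nonneg: "\<forall>m<n. y m \<ge> 0"
    and j: "j \<in> ras_M n y a"
  shows "j < n" and "\<forall>i<n. (real (a j) + 1) * y j \<le> (real (a i) + 1) * y i"
proof -
  let ?R = "ras_range n a"
  let ?norm = "\<lambda>i. supnorm n (\<lambda>m. real (a m + unitv i m) * y m)"
  have R: "?R \<subseteq> {0..<n}" using ras_range_subset[OF n] .
  then show jn: "j < n" using j unfolding ras_M_def by auto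
  have min_R: "(real (a j) + 1) * y j \<le> (real (a k) + 1) * y k" if "k \<in> ?R" for k
  proof -
    have "?norm j \<le> ?norm k" using j that unfolding ras_M_def by auto
    then show ?thesis
      using that R jn supnorm_add_unitv_balanced[OF bal nonneg] by auto
  qed
  show "\<forall>i<n. (real (a j) + 1) * y j \<le> (real (a i) + 1) * y i"
  proof (intro allI impI)
    fix i assume i: "i < n"
    show "(real (a j) + 1) * y j \<le> (real (a i) + 1) * y i"
    proof (cases "i \<in> ?R")
      case True
      then show ?thesis by (rule min_R)
    next
      case False
      define k where "k = (LEAST i. a i = 0)"
      have last0: "a (n - 1) = 0" and ki: "k < i"
        using False i unfolding ras_range_def k_def by (auto split: if_splits)
      have ak: "a k = 0" unfolding k_def using last0 by (rule LeastI)
      have "k \<in> ?R" using last0 unfolding ras_range_def k_def by simp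
      then have "(real (a j) + 1) * y j \<le> (real (a k) + 1) * y k" by (rule min_R)
      also have "\<dots> = y k" using ak by simp
      also have "\<dots> \<le> y i" using sorted ki i by auto
      also have "\<dots> \<le> (real (a i) + 1) * y i" using nonneg i by (simp add: algebra_simps)
      finally show ?thesis .
    qed
  qed
qed

lemma ras_sorted_balanced:
  assumes "ras_sorted n y B a" and "n \<ge> 1"
    and sorted: "\<forall>i j. i \<le> j \<and> j < n \<longrightarrow> y i \<le> y j" and nonneg: "\<forall>m<n. y m \<ge> 0"
  shows "balanced n y a"
  using assms(1)
proof (induction rule: ras_sorted.induct)
  case base
  show ?case using balanced_unitv_0[OF sorted nonneg] .
next
  case (step B a j)
  show ?case
    using balanced_add_unitv_at_min[OF step.IH nonneg]
      ras_M_global_min[OF \<open>n \<ge> 1\<close> step.IH sorted nonneg step.hyps(2)]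
    by blast
qed

lemma ras_balanced:
  assumes "n \<ge> 1" and nonneg: "\<forall>m<n. x m \<ge> 0" and "ras n x B a"
  shows "balanced n x a"
  unfolding balanced_def
proof (intro allI impI)
  obtain \<sigma> b where bij: "bij_betw \<sigma> {0..<n} {0..<n}"
    and sorted: "\<forall>i j. i \<le> j \<and> j < n \<longrightarrow> x (\<sigma> i) \<le> x (\<sigma> j)"
    and run: "ras_sorted n (x \<circ> \<sigma>) B b"
    and ab: "\<forall>i<n. a (\<sigma> i) = b i"
    using \<open>ras n x B a\<close> unfolding ras_def by blast
  have "\<forall>m<n. (x \<circ> \<sigma>) m \<ge> 0"
    using nonneg bij by (auto dest: bij_betw_apply)
  then have bal: "balanced n (x \<circ> \<sigma>) b"
    using ras_sorted_balanced[OF run \<open>n \<ge> 1\<close>] sorted by simp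
  have onto: "\<sigma> ` {0..<n} = {0..<n}" using bij by (simp add: bij_betw_def)
  fix p q assume "p < n" "q < n"
  then have "p \<in> \<sigma> ` {0..<n}" "q \<in> \<sigma> ` {0..<n}" using onto by auto
  then obtain p' q' where "p' < n" "q' < n" "p = \<sigma> p'" "q = \<sigma> q'" by auto
  then show "real (a q) * x q \<le> (real (a p) + 1) * x p"
    using bal ab unfolding balanced_def by simp
qed

theorem lemmaD1:
  fixes n B :: nat and x :: "nat \<Rightarrow> real" and a :: "nat \<Rightarrow> nat"
  assumes "n \<ge> 1"
    and "\<forall>i < n. x i \<ge> 0"
    and "B \<ge> 1"
    and "ras n x B a"
    and "i < n" and "j < n"
  shows "real (a j) * x j \<le> (real (a i) + 1) * x i"
  using ras_balanced[OF assms(1,2,4)] assms(5,6) unfolding balanced_def by blast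

end
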